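(* Fix a static program and its associated dimension function $\#$. For every expression $e$ with $\#(e)=\top$ and every expression context $C[\cdot]$, we have $\#(C[e])=\top$. That is, any expression containing an inconsistently-dimensioned subexpression is itself inconsistently-dimensioned.
   Context: Expressions: fix countable sets of variables $\mathbb{X}$, procedure names $\mathbb{F}$, primitive names $\Pi$, handles $\mathbb{H}$, and a set of values $\mathbb{C}$. Expressions are $e ::= x_h \mid c_h \mid [\mathrm{let}_h\,x_1\dots x_n \text{ be } e \text{ in } e] \mid [\mathrm{call}_h\,f\ e_1\dots e_n] \mid [\mathrm{primitive}_h\,\pi\ e_1\dots e_n] \mid [\mathrm{if}_h\,e\in\{c_1,\dots,c_n\}\text{ then } e \text{ else } e] \mid [\mathrm{fork}_h\,f\ e_1\dots e_n] \mid [\mathrm{join}_h\,e] \mid [\mathrm{bundle}_h\,e_1\dots e_n]$ ($n\ge0$), with handles pairwise distinct. An expression context $C[\cdot]$ is an expression with a single hole occurring in a subexpression position (possibly the whole expression). A program consists of a procedure environment (a finite map from procedure names $f$ to formals $x_1\dots x_n$ and a body expression), a primitive environment in which each primitive $\pi$ has an in-dimension $n$ and out-dimension $m$ (written $\pi:_\# n\to m$), and a main expression. Dimension lattice: $\mathbb{N}_\bot^\top=\{\bot,\top\}\cup\{\uparrow n: n\in\mathbb{N}\}$ with the flat order $\bot\sqsubset\uparrow n\sqsubset\top$ (distinct $\uparrow n$ incomparable), join $\sqcup$; $\mathbb{N}_\bot=\mathbb{N}_\bot^\top\setminus\{\top\}$. The relation $e:_\# d$ ($d\in\mathbb{N}_\bot$)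 and procedure dimensions $f:_\# n\to d$ are defined mutually recursively: $x_h:_\#\uparrow1$; $c_h:_\#\uparrow1$; $[\mathrm{bundle}_{h_0}e_1..e_n]:_\#\uparrow n$ if $e_i:_\# d_i$ with $d_i\sqsubseteq\uparrow1$ for all $i$; $[\mathrm{let}_{h_0}x_1..x_n\text{ be }e_1\text{ in }e_2]:_\# d_2$ if $e_1:_\# d_1$, $e_2:_\# d_2$, $d_1\sqsubseteq\uparrow m$ for some $m\ge n$ and $d_2\sqsubset\top$; $[\mathrm{primitive}_{h_0}\pi\,e_1..e_n]:_\#\uparrow m$ if $\pi:_\# n\to m$ and $e_i:_\# d_i\sqsubseteq\uparrow1$ for all $i$; $[\mathrm{call}_{h_0}f\,e_1..e_n]:_\# d$ if $f:_\# n\to d$, $e_i:_\# d_i\sqsubseteq\uparrow1$ for all $i$, and $d\sqsubset\top$; $[\mathrm{if}_{h_0}e_1\in\{c_1..c_n\}\text{ then }e_2\text{ else }e_3]:_\# d$ if $e_j:_\# d_j$ ($j=1,2,3$), $d_1\sqsubseteq\uparrow1$, $d=d_2\sqcup d_3$ and $d\sqsubset\top$; $[\mathrm{fork}_{h_0}f\,e_1..e_n]:_\#\uparrow1$ if $f:_\# n\to d$ with $d\sqsubseteq\uparrow1$ and $e_i:_\# d_i\sqsubseteq\uparrow1$ for all $i$; $[\mathrm{join}_{h_0}e_1]:_\#\uparrow1$ if $e_1:_\# d_1\sqsubseteq\uparrow1$. For each procedure $f$ of the program with formals $x_1..x_n$ and body $b$, $f:_\# n\to d$ where $d$ is the least fixpoint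 such that $\#(b)=d$. Finally $\#:\text{Expressions}\to\mathbb{N}_\bot^\top$ is the total extension of $:_\#$, returning $\top$ where $:_\#$ is undefined. An expression $e$ is inconsistently-dimensioned if $\#(e)=\top$. *)

theory Defs
  imports Main
begin

text \<open>Type parameters: 'x variables, 'f procedure names, 'p primitive names,
  'h handles, 'c values.\<close>

datatype ('x, 'f, 'p, 'h, 'c) expr =
    Var 'x 'h
  | Const 'c 'h
  | Let 'h "'x list" "('x, 'f, 'p, 'h, 'c) expr" "('x, 'f, 'p, 'h, 'c) expr"
  | Call 'h 'f "('x, 'f, 'p, 'h, 'c) expr list"
  | Prim 'h 'p "('x, 'f, 'p, 'h, 'c) expr list"
  | If 'h "('x, 'f, 'p, 'h, 'c) expr" "'c list" "('x, 'f, 'p, 'h, 'c) expr" "('x, 'f, 'p, 'h, 'c) expr"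
  | Fork 'h 'f "('x, 'f, 'p, 'h, 'c) expr list"
  | Join 'h "('x, 'f, 'p, 'h, 'c) expr"
  | Bundle 'h "('x, 'f, 'p, 'h, 'c) expr list"

fun handles :: "('x, 'f, 'p, 'h, 'c) expr \<Rightarrow> 'h list" where
  "handles (Var x h) = [h]"
| "handles (Const c h) = [h]"
| "handles (Let h xs e1 e2) = h # handles e1 @ handles e2"
| "handles (Call h f es) = h # concat (map handles es)"
| "handles (Prim h p es) = h # concat (map handles es)"
| "handles (If h e1 cs e2 e3) = h # handles e1 @ handles e2 @ handles e3"
| "handles (Fork h f es) = h # concat (map handles es)"
| "handles (Join h e) = h # handles e"
| "handles (Bundle h es) = h # concat (map handles es)"

text \<open>An expression in the sense of the paper: handles pairwise distinct.\<close>
definition wf_expr :: "('x, 'f, 'p, 'h, 'c) expr \<Rightarrow> bool" where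
  "wf_expr e \<longleftrightarrow> distinct (handles e)"

datatype ('x, 'f, 'p, 'h, 'c) ctx =
    Hole
  | LetL 'h "'x list" "('x, 'f, 'p, 'h, 'c) ctx" "('x, 'f, 'p, 'h, 'c) expr"
  | LetR 'h "'x list" "('x, 'f, 'p, 'h, 'c) expr" "('x, 'f, 'p, 'h, 'c) ctx"
  | CallC 'h 'f "('x, 'f, 'p, 'h, 'c) expr list" "('x, 'f, 'p, 'h, 'c) ctx" "('x, 'f, 'p, 'h, 'c) expr list"
  | PrimC 'h 'p "('x, 'f, 'p, 'h, 'c) expr list" "('x, 'f, 'p, 'h, 'c) ctx" "('x, 'f, 'p, 'h, 'c) expr list"
  | IfC1 'h "('x, 'f, 'p, 'h, 'c) ctx" "'c list" "('x, 'f, 'p, 'h, 'c) expr" "('x, 'f, 'p, 'h, 'c) expr"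
  | IfC2 'h "('x, 'f, 'p, 'h, 'c) expr" "'c list" "('x, 'f, 'p, 'h, 'c) ctx" "('x, 'f, 'p, 'h, 'c) expr"
  | IfC3 'h "('x, 'f, 'p, 'h, 'c) expr" "'c list" "('x, 'f, 'p, 'h, 'c) expr" "('x, 'f, 'p, 'h, 'c) ctx"
  | ForkC 'h 'f "('x, 'f, 'p, 'h, 'c) expr list" "('x, 'f, 'p, 'h, 'c) ctx" "('x, 'f, 'p, 'h, 'c) expr list"
  | JoinC 'h "('x, 'f, 'p, 'h, 'c) ctx"
  | BundleC 'h "('x, 'f, 'p, 'h, 'c) expr list" "('x, 'f, 'p, 'h, 'c) ctx" "('x, 'f, 'p, 'h, 'c) expr list"

fun fill :: "('x, 'f, 'p, 'h, 'c) ctx \<Rightarrow> ('x, 'f, 'p, 'h, 'c) expr \<Rightarrow> ('x, 'f, 'p, 'h, 'c) expr" where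
  "fill Hole e = e"
| "fill (LetL h xs C e2) e = Let h xs (fill C e) e2"
| "fill (LetR h xs e1 C) e = Let h xs e1 (fill C e)"
| "fill (CallC h f as C bs) e = Call h f (as @ fill C e # bs)"
| "fill (PrimC h p as C bs) e = Prim h p (as @ fill C e # bs)"
| "fill (IfC1 h C cs e2 e3) e = If h (fill C e) cs e2 e3"
| "fill (IfC2 h e1 cs C e3) e = If h e1 cs (fill C e) e3"
| "fill (IfC3 h e1 cs e2 C) e = If h e1 cs e2 (fill C e)"
| "fill (ForkC h f as C bs) e = Fork h f (as @ fill C e # bs)"
| "fill (JoinC h C) e = Join h (fill C e)"
| "fill (BundleC h as C bs) e = Bundle h (as @ fill C e # bs)"

record ('x, 'f, 'p, 'h, 'c) prog =
  procs :: "'f \<rightharpoonup> ('x list \<times> ('x, 'f, 'p, 'h, 'c) expr)"  \<comment> \<open>formals and body\<close>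
  prims :: "'p \<rightharpoonup> (nat \<times> nat)"  \<comment> \<open>in-dimension, out-dimension\<close>
  main_expr :: "('x, 'f, 'p, 'h, 'c) expr"

datatype dim = Bot | Up nat | Top

fun dle :: "dim \<Rightarrow> dim \<Rightarrow> bool" where
  "dle Bot _ = True"
| "dle (Up n) d = (d = Up n \<or> d = Top)"
| "dle Top d = (d = Top)"

fun djoin :: "dim \<Rightarrow> dim \<Rightarrow> dim" where
  "djoin Bot d = d"
| "djoin d Bot = d"
| "djoin (Up n) (Up m) = (if n = m then Up n else Top)"
| "djoin _ _ = Top"

text \<open>Total extension of the relation e :# d, returning Top where undefined.
  PD f is the result dimension d of procedure f (f :# n \<rightarrow> d, with n the number
  of formals of f).\<close>

fun dimE :: "('x, 'f, 'p, 'h, 'c) prog \<Rightarrow> ('f \<Rightarrow> dim) \<Rightarrow> ('x, 'f, 'p, 'h, 'c) expr \<Rightarrow> dim" where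
  "dimE P PD (Var x h) = Up 1"
| "dimE P PD (Const c h) = Up 1"
| "dimE P PD (Bundle h es) =
     (if (\<forall>e\<in>set es. dle (dimE P PD e) (Up 1)) then Up (length es) else Top)"
| "dimE P PD (Let h xs e1 e2) =
     (let d1 = dimE P PD e1; d2 = dimE P PD e2 in
      if (\<exists>m. m \<ge> length xs \<and> dle d1 (Up m)) \<and> d2 \<noteq> Top then d2 else Top)"
| "dimE P PD (Prim h p es) =
     (case prims P p of
        None \<Rightarrow> Top
      | Some (n, m) \<Rightarrow>
          (if n = length es \<and> (\<forall>e\<in>set es. dle (dimE P PD e) (Up 1)) then Up m else Top))"
| "dimE P PD (Call h f es) =
     (case procs P f of
        None \<Rightarrow> Top
      | Some (xs, b) \<Rightarrow>
          (if length xs = length es \<and> (\<forall>e\<in>set es. dle (dimE P PD e) (Up 1)) \<and> PD f \<noteq> Top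
           then PD f else Top))"
| "dimE P PD (If h e1 cs e2 e3) =
     (let d = djoin (dimE P PD e2) (dimE P PD e3) in
      if dle (dimE P PD e1) (Up 1) \<and> d \<noteq> Top then d else Top)"
| "dimE P PD (Fork h f es) =
     (case procs P f of
        None \<Rightarrow> Top
      | Some (xs, b) \<Rightarrow>
          (if length xs = length es \<and> dle (PD f) (Up 1) \<and> (\<forall>e\<in>set es. dle (dimE P PD e) (Up 1))
           then Up 1 else Top))"
| "dimE P PD (Join h e) = (if dle (dimE P PD e) (Up 1) then Up 1 else Top)"

definition proc_step :: "('x, 'f, 'p, 'h, 'c) prog \<Rightarrow> ('f \<Rightarrow> dim) \<Rightarrow> ('f \<Rightarrow> dim)" where
  "proc_step P PD = (\<lambda>f. case procs P f of None \<Rightarrow> Bot | Some (xs, b) \<Rightarrow> dimE P PD b)"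

definition proc_dims :: "('x, 'f, 'p, 'h, 'c) prog \<Rightarrow> ('f \<Rightarrow> dim)" where
  "proc_dims P = (THE PD. proc_step P PD = PD \<and>
      (\<forall>PD'. proc_step P PD' = PD' \<longrightarrow> (\<forall>f. dle (PD f) (PD' f))))"

definition dim_of :: "('x, 'f, 'p, 'h, 'c) prog \<Rightarrow> ('x, 'f, 'p, 'h, 'c) expr \<Rightarrow> dim" where
  "dim_of P e = dimE P (proc_dims P) e"

end

theory Submission
  imports Defs
begin

text \<open>Every typing rule requires its immediate subexpressions to have a dimension below
  \<open>Top\<close>, and the join of the two branches of a conditional is absorbed by \<open>Top\<close>; hence
  \<open>Top\<close> propagates from the hole outwards, for any procedure dimensions whatsoever.\<close>

lemma djoin_Top [simp]: "djoin Top d = Top" "djoin d Top = Top"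
  by (cases d; simp)+

lemma dimE_fill_Top:
  assumes "dimE P PD e = Top"
  shows "dimE P PD (fill C e) = Top"
  using assms by (induction C) (auto simp: Let_def split: option.splits)

theorem mainTheorem2:
  fixes P :: "('x, 'f, 'p, 'h, 'c) prog"
    and e :: "('x, 'f, 'p, 'h, 'c) expr"
    and C :: "('x, 'f, 'p, 'h, 'c) ctx"
  assumes "wf_expr (fill C e)"
    and "dim_of P e = Top"
  shows "dim_of P (fill C e) = Top"
  using assms(2) dimE_fill_Top unfolding dim_of_def by blast

end
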